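(* Let $G$ be a group, $c\in G$, and $k_1,\dots,k_n$ integers with $k=\gcd(k_1,\dots,k_n)$. If the set $\{(x_1,\dots,x_n)\in G^n:x_1^{k_1}\cdots x_n^{k_n}=c\}$ is $2$-large in $G^n$, then $z^k=1$ for all $z\in Z(G)$.
   Context: A subset $X$ of a group $K$ is $2$-large in $K$ if $aX\cap bX\ne\emptyset$ for all $a,b\in K$. *)

theory Defs
  imports "HOL-Algebra.Algebra"
begin

definition two_large :: "('a, 'b) monoid_scheme \<Rightarrow> 'a set \<Rightarrow> bool" where
  "two_large GG S \<longleftrightarrow> (\<forall>a\<in>carrier GG. \<forall>b\<in>carrier GG. l_coset GG a S \<inter> l_coset GG b S \<noteq> {})"

definition group_center :: "('a, 'b) monoid_scheme \<Rightarrow> 'a set" where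
  "group_center G = {z \<in> carrier G. \<forall>g\<in>carrier G. z \<otimes>\<^bsub>G\<^esub> g = g \<otimes>\<^bsub>G\<^esub> z}"

definition power_group :: "('a, 'b) monoid_scheme \<Rightarrow> nat \<Rightarrow> (nat \<Rightarrow> 'a) monoid" where
  "power_group G n = product_group {..<n} (\<lambda>_. G)"

fun word_val :: "('a, 'b) monoid_scheme \<Rightarrow> (nat \<Rightarrow> int) \<Rightarrow> (nat \<Rightarrow> 'a) \<Rightarrow> nat \<Rightarrow> 'a" where
  "word_val G k x 0 = \<one>\<^bsub>G\<^esub>"
| "word_val G k x (Suc m) = word_val G k x m \<otimes>\<^bsub>G\<^esub> (x m [^]\<^bsub>G\<^esub> k m)"

end

theory Submission
  imports Defs
begin

text \<open>
  Let \<open>z\<close> be central and let \<open>e\<^sub>i\<close> be the tuple with \<open>z\<close> in position \<open>i\<close> and \<open>1\<close> elsewhere.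
  Since \<open>X X\<^sup>-\<^sup>1\<close> is all of \<open>G\<^sup>n\<close> for a 2-large set \<open>X\<close>, there are solutions \<open>x, y\<close> of
  \<open>x\<^sub>1\<^bsup>k\<^sub>1\<^esup> \<cdots> x\<^sub>n\<^bsup>k\<^sub>n\<^esup> = c\<close> with \<open>x = e\<^sub>i y\<close>. Because \<open>z\<close> is central, its power \<open>z\<^bsup>k\<^sub>i\<^esup>\<close> can be
  pulled out of the word, giving \<open>c = c z\<^bsup>k\<^sub>i\<^esup>\<close>. So the order of \<open>z\<close> divides every \<open>k\<^sub>i\<close>,
  hence divides their gcd.
\<close>

lemma (in group) group_center_commute:
  "z \<in> group_center G \<Longrightarrow> g \<in> carrier G \<Longrightarrow> z \<otimes> g = g \<otimes> z"
  by (simp add: group_center_def)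

lemma (in group) group_center_subset: "group_center G \<subseteq> carrier G"
  by (auto simp: group_center_def)

lemma (in group) subgroup_group_center: "subgroup (group_center G) G"
proof (rule subgroupI)
  fix z assume z: "z \<in> group_center G"
  have "inv z \<otimes> g = g \<otimes> inv z" if g: "g \<in> carrier G" for g
  proof -
    have "inv (z \<otimes> inv g) = inv (inv g \<otimes> z)"
      using group_center_commute[OF z] g by simp
    then show ?thesis using z g group_center_subset by (simp add: subsetD inv_mult_group)
  qed
  then show "inv z \<in> group_center G"
    using z group_center_subset unfolding group_center_def by blast
next
  fix a b assume a: "a \<in> group_center G" and b: "b \<in> group_center G"
  then have ac: "a \<in> carrier G" and bc: "b \<in> carrier G"
    using group_center_subset by auto
  have "a \<otimes> b \<otimes> g = g \<otimes> (a \<otimes> b)" if g: "g \<in> carrier G" for g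
  proof -
    have "a \<otimes> b \<otimes> g = a \<otimes> (g \<otimes> b)"
      using group_center_commute[OF b g] ac bc g by (simp add: m_assoc)
    also have "\<dots> = g \<otimes> (a \<otimes> b)"
      using group_center_commute[OF a g] ac bc g by (simp flip: m_assoc)
    finally show ?thesis .
  qed
  with ac bc show "a \<otimes> b \<in> group_center G" unfolding group_center_def by blast
qed (auto simp: group_center_def)

lemma word_val_cong:
  "(\<And>j. j < m \<Longrightarrow> x j = y j) \<Longrightarrow> word_val G k x m = word_val G k y m"
  by (induction m) simp_all

lemma (in group) word_val_mem_subgroup:
  "subgroup H G \<Longrightarrow> (\<And>j. j < m \<Longrightarrow> x j \<in> H) \<Longrightarrow> word_val G k x m \<in> H"
  by (induction m) (simp_all add: subgroup.one_closed subgroup.m_closed subgroup_int_pow_closed)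

lemma (in group) word_val_closed:
  "(\<And>j. j < m \<Longrightarrow> x j \<in> carrier G) \<Longrightarrow> word_val G k x m \<in> carrier G"
  by (rule word_val_mem_subgroup[OF subgroup_self])

lemma (in group) word_val_indicator:
  "z \<in> carrier G \<Longrightarrow>
    word_val G k (\<lambda>j. if j = i then z else \<one>) m = (if i < m then z [^] k i else \<one>)"
  by (induction m) (auto simp: less_Suc_eq)

lemma (in group) word_val_mult_center:
  assumes "\<And>j. j < m \<Longrightarrow> u j \<in> group_center G" and "\<And>j. j < m \<Longrightarrow> y j \<in> carrier G"
  shows "word_val G k (\<lambda>j. u j \<otimes> y j) m = word_val G k y m \<otimes> word_val G k u m"
  using assms
proof (induction m)
  case (Suc m)
  let ?Wy = "word_val G k y m" and ?Wu = "word_val G k u m"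
  let ?a = "u m [^] k m" and ?b = "y m [^] k m"
  have Wu: "?Wu \<in> group_center G"
    using Suc.prems(1) by (intro word_val_mem_subgroup[OF subgroup_group_center]) simp
  have a: "?a \<in> group_center G"
    using Suc.prems(1) by (intro subgroup_int_pow_closed[OF subgroup_group_center]) simp
  have Wua: "?Wu \<otimes> ?a \<in> group_center G"
    by (rule subgroup.m_closed[OF subgroup_group_center Wu a])
  have Wy: "?Wy \<in> carrier G" using Suc.prems(2) by (intro word_val_closed) simp
  have b: "?b \<in> carrier G" using Suc.prems(2) by simp
  have "(u m \<otimes> y m) [^] k m = ?a \<otimes> ?b"
    using Suc.prems group_center_subset by (intro int_pow_mult_distrib group_center_commute) auto
  then have "word_val G k (\<lambda>j. u j \<otimes> y j) (Suc m) = ?Wy \<otimes> ?Wu \<otimes> (?a \<otimes> ?b)"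
    using Suc by simp
  also have "\<dots> = ?Wy \<otimes> ((?Wu \<otimes> ?a) \<otimes> ?b)"
    using Wu a Wy b group_center_subset by (simp add: subsetD m_assoc)
  also have "\<dots> = ?Wy \<otimes> (?b \<otimes> (?Wu \<otimes> ?a))"
    using group_center_commute[OF Wua b] by simp
  also have "\<dots> = word_val G k y (Suc m) \<otimes> word_val G k u (Suc m)"
    using Wu a Wy b group_center_subset by (simp add: subsetD m_assoc)
  finally show ?case .
qed simp

lemma (in group) two_large_translate:
  assumes "two_large G S" and "S \<subseteq> carrier G" and "g \<in> carrier G"
  obtains x y where "x \<in> S" and "y \<in> S" and "x = g \<otimes> y"
proof -
  have "l_coset G \<one> S \<inter> l_coset G g S \<noteq> {}"
    using assms(1,3) unfolding two_large_def by simp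
  then show ?thesis
    using that lcos_mult_one[OF assms(2)] unfolding l_coset_def by blast
qed

lemma (in group) int_pow_Gcd_eq_one:
  fixes A :: "int set"
  assumes "x \<in> carrier G" and "\<And>j. j \<in> A \<Longrightarrow> x [^] j = \<one>"
  shows "x [^] Gcd A = \<one>"
proof -
  have "int (ord x) dvd Gcd A"
    by (rule Gcd_greatest) (use assms in \<open>simp add: int_pow_eq_id\<close>)
  then show ?thesis by (simp add: int_pow_eq_id assms(1))
qed

lemma (in group) center_pow_coeff_eq_one:
  assumes large: "two_large (power_group G n) {x \<in> carrier (power_group G n). word_val G k x n = c}"
    and c: "c \<in> carrier G" and z: "z \<in> group_center G" and i: "i < n"
  shows "z [^] k i = \<one>"
proof -
  let ?P = "power_group G n"
  define e where "e = (\<lambda>j. if j = i then z else \<one>)"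
  have zc: "z \<in> carrier G" using z by (simp add: group_center_def)
  have "restrict e {..<n} \<in> carrier ?P"
    using zc by (auto simp: power_group_def e_def)
  moreover have "group ?P"
    by (simp add: power_group_def group_axioms)
  ultimately obtain x y where x: "x \<in> carrier ?P" "word_val G k x n = c"
      and y: "y \<in> carrier ?P" "word_val G k y n = c"
      and xy: "x = restrict e {..<n} \<otimes>\<^bsub>?P\<^esub> y"
    using group.two_large_translate[OF _ large] by blast
  have "c = word_val G k (\<lambda>j. e j \<otimes> y j) n"
    using x(2) xy by (auto simp: power_group_def intro!: word_val_cong)
  also have "\<dots> = c \<otimes> z [^] k i"
    using y z zc i subgroup.one_closed[OF subgroup_group_center]
    by (subst word_val_mult_center) (auto simp: power_group_def e_def word_val_indicator)
  finally show ?thesis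
    using c zc by (metis l_cancel int_pow_closed one_closed r_one)
qed

theorem corollary3p10:
  fixes G :: "('a, 'b) monoid_scheme" and c :: 'a and k :: "nat \<Rightarrow> int" and n :: nat
  assumes "group G"
    and "c \<in> carrier G"
    and "two_large (power_group G n)
           {x \<in> carrier (power_group G n). word_val G k x n = c}"
  shows "\<forall>z \<in> group_center G. z [^]\<^bsub>G\<^esub> (Gcd (k ` {..<n})) = \<one>\<^bsub>G\<^esub>"
proof
  fix z assume z: "z \<in> group_center G"
  show "z [^]\<^bsub>G\<^esub> Gcd (k ` {..<n}) = \<one>\<^bsub>G\<^esub>"
  proof (rule group.int_pow_Gcd_eq_one[OF assms(1)])
    show "z \<in> carrier G" using z by (simp add: group_center_def)
    show "\<And>j. j \<in> k ` {..<n} \<Longrightarrow> z [^]\<^bsub>G\<^esub> j = \<one>\<^bsub>G\<^esub>"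
      using group.center_pow_coeff_eq_one[OF assms(1,3,2) z] by blast
  qed
qed

end
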